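(* A category $S$ is conical if and only if its universal monoid $\mathrm{U_{mon}}(S)$ is conical.
   Context: Categories are arrow-only: a set $S$ with a partial associative multiplication, set of identities $\mathrm{Id}\,S$, and each $x$ has source and target identities. $S$ is conical if, whenever $xy$ is defined and belongs to $\mathrm{Id}\,S$, then $x\in\mathrm{Id}\,S$ (equivalently $y\in\mathrm{Id}\,S$); for a monoid this means $xy=1$ implies $x=y=1$. $\mathrm{U_{mon}}(S)$ is the monoid presented by generators $\varepsilon_S(x)$ ($x\in S$) and relations $\varepsilon_S(e)=1$ ($e\in\mathrm{Id}\,S$), $\varepsilon_S(x)\varepsilon_S(y)=\varepsilon_S(xy)$ whenever $xy$ is defined. *)

theory Defs
  imports "HOL-Algebra.Group"
begin

text \<open>Arrow-only categories: a set of arrows with a partial multiplication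
  (x \<cdot> y defined iff the source of x equals the target of y), a set of identities,
  and source/target maps.\<close>

record 'a category =
  arr :: "'a set"
  ids :: "'a set"
  cmp :: "'a \<Rightarrow> 'a \<Rightarrow> 'a option"
  src :: "'a \<Rightarrow> 'a"
  tgt :: "'a \<Rightarrow> 'a"

definition is_category :: "('a, 'b) category_scheme \<Rightarrow> bool" where
  "is_category S \<longleftrightarrow>
     ids S \<subseteq> arr S
   \<and> (\<forall>x y z. cmp S x y = Some z \<longrightarrow> x \<in> arr S \<and> y \<in> arr S \<and> z \<in> arr S)
   \<and> (\<forall>x \<in> arr S. src S x \<in> ids S \<and> tgt S x \<in> ids S)
   \<and> (\<forall>x \<in> arr S. \<forall>y \<in> arr S. cmp S x y \<noteq> None \<longleftrightarrow> src S x = tgt S y)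
   \<and> (\<forall>x y z. cmp S x y = Some z \<longrightarrow> src S z = src S y \<and> tgt S z = tgt S x)
   \<and> (\<forall>x y z xy yz. cmp S x y = Some xy \<longrightarrow> cmp S y z = Some yz \<longrightarrow>
          cmp S xy z = cmp S x yz)
   \<and> (\<forall>e \<in> ids S. src S e = e \<and> tgt S e = e)
   \<and> (\<forall>x \<in> arr S. cmp S x (src S x) = Some x \<and> cmp S (tgt S x) x = Some x)"

definition conical_category :: "('a, 'b) category_scheme \<Rightarrow> bool" where
  "conical_category S \<longleftrightarrow>
     (\<forall>x y z. cmp S x y = Some z \<longrightarrow> z \<in> ids S \<longrightarrow> x \<in> ids S)"

definition conical_monoid :: "('c, 'd) monoid_scheme \<Rightarrow> bool" where
  "conical_monoid M \<longleftrightarrow>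
     (\<forall>x \<in> carrier M. \<forall>y \<in> carrier M. x \<otimes>\<^bsub>M\<^esub> y = \<one>\<^bsub>M\<^esub> \<longrightarrow> x = \<one>\<^bsub>M\<^esub> \<and> y = \<one>\<^bsub>M\<^esub>)"

text \<open>The monoid congruence on words over the arrows (the free monoid on
  generators \<open>\<epsilon>(x)\<close>) generated by the defining relations of U_mon(S).\<close>
inductive umon_eq :: "('a, 'b) category_scheme \<Rightarrow> 'a list \<Rightarrow> 'a list \<Rightarrow> bool"
  for S where
  rel_id: "e \<in> ids S \<Longrightarrow> umon_eq S [e] []"
| rel_mult: "cmp S x y = Some z \<Longrightarrow> umon_eq S [x, y] [z]"
| refl: "w \<in> lists (arr S) \<Longrightarrow> umon_eq S w w"
| sym: "umon_eq S u v \<Longrightarrow> umon_eq S v u"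
| trans: "umon_eq S u v \<Longrightarrow> umon_eq S v w \<Longrightarrow> umon_eq S u w"
| ctxt: "umon_eq S u v \<Longrightarrow> p \<in> lists (arr S) \<Longrightarrow> q \<in> lists (arr S) \<Longrightarrow>
         umon_eq S (p @ u @ q) (p @ v @ q)"

definition umon_rel :: "('a, 'b) category_scheme \<Rightarrow> ('a list \<times> 'a list) set" where
  "umon_rel S = {(u, v). umon_eq S u v}"

definition U_mon :: "('a, 'b) category_scheme \<Rightarrow> 'a list set monoid" where
  "U_mon S = \<lparr> carrier = lists (arr S) // umon_rel S,
               mult = (\<lambda>A B. \<Union>a \<in> A. \<Union>b \<in> B. umon_rel S `` {a @ b}),
               one = umon_rel S `` {[]} \<rparr>"

end

theory Submission
  imports Defs
begin

text \<open>If \<open>S\<close> is conical, the relations of \<open>U_mon(S)\<close> never turn a word containing a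
  non-identity letter into one consisting of identities only, so two classes with product \<open>1\<close>
  are represented by words of identities and are both \<open>1\<close>. Conversely, if \<open>x y\<close> is an identity
  then \<open>\<epsilon>(x) \<epsilon>(y) = 1\<close>, and conicality of \<open>U_mon(S)\<close> gives \<open>\<epsilon>(x) = 1\<close>; to conclude that \<open>x\<close>
  is an identity one lets \<open>U_mon(S)\<close> act on reduced words (no identities, no composable
  neighbours) by "prepend and compose", under which \<open>\<epsilon>(x)\<close> moves the empty word unless \<open>x\<close> is
  an identity.\<close>

locale arrow_category =
  fixes S :: "('a, 'b) category_scheme"
  assumes is_category: "is_category S"
begin

lemma ids_subset_arr: "ids S \<subseteq> arr S"
  and cmp_arrD: "cmp S x y = Some z \<Longrightarrow> x \<in> arr S \<and> y \<in> arr S \<and> z \<in> arr S"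
  and cmp_eq_None_iff: "x \<in> arr S \<Longrightarrow> y \<in> arr S \<Longrightarrow> cmp S x y = None \<longleftrightarrow> src S x \<noteq> tgt S y"
  and src_tgt_cmp: "cmp S x y = Some z \<Longrightarrow> src S z = src S y \<and> tgt S z = tgt S x"
  and cmp_assoc: "cmp S x y = Some xy \<Longrightarrow> cmp S y z = Some yz \<Longrightarrow> cmp S xy z = cmp S x yz"
  and src_tgt_id: "e \<in> ids S \<Longrightarrow> src S e = e \<and> tgt S e = e"
  and cmp_src_tgt: "x \<in> arr S \<Longrightarrow> cmp S x (src S x) = Some x \<and> cmp S (tgt S x) x = Some x"
  using is_category unfolding is_category_def by meson+

lemma cmp_id_left: "cmp S e y = Some z \<Longrightarrow> e \<in> ids S \<Longrightarrow> z = y"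
  using cmp_arrD cmp_eq_None_iff src_tgt_id cmp_src_tgt by (metis option.distinct(1) option.inject)

lemma cmp_id_right: "cmp S x e = Some z \<Longrightarrow> e \<in> ids S \<Longrightarrow> z = x"
  using cmp_arrD cmp_eq_None_iff src_tgt_id cmp_src_tgt by (metis option.distinct(1) option.inject)

lemma umon_eq_lists: "umon_eq S u v \<Longrightarrow> u \<in> lists (arr S) \<and> v \<in> lists (arr S)"
  by (induction rule: umon_eq.induct) (use ids_subset_arr cmp_arrD in auto)

fun reduced :: "'a list \<Rightarrow> bool" where
  "reduced [] = True"
| "reduced [u] = (u \<in> arr S - ids S)"
| "reduced (u # t # w) = (u \<in> arr S - ids S \<and> src S u \<noteq> tgt S t \<and> reduced (t # w))"

fun act :: "'a \<Rightarrow> 'a list \<Rightarrow> 'a list" where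
  "act x [] = (if x \<in> ids S then [] else [x])"
| "act x (u # w) =
     (if x \<in> ids S then u # w
      else case cmp S x u of
             None \<Rightarrow> x # u # w
           | Some z \<Rightarrow> if z \<in> ids S then w else z # w)"

lemma reduced_ConsD: "reduced (u # w) \<Longrightarrow> u \<in> arr S - ids S \<and> reduced w"
  by (cases w) auto

lemma reduced_Cons_same_src:
  "reduced (u # w) \<Longrightarrow> x \<in> arr S - ids S \<Longrightarrow> src S x = src S u \<Longrightarrow> reduced (x # w)"
  by (cases w) auto

lemma act_same_src:
  assumes "reduced (u # w)" "x \<in> arr S - ids S" "src S x = src S u"
  shows "act x w = x # w"
proof (cases w)
  case (Cons t w')
  then have "t \<in> arr S" "src S x \<noteq> tgt S t"
    using assms reduced_ConsD[of t w'] by auto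
  then have "cmp S x t = None" using assms cmp_eq_None_iff by blast
  then show ?thesis using Cons assms by simp
qed (use assms in simp)

lemma act_id: "e \<in> ids S \<Longrightarrow> act e w = w"
  by (cases w) auto

lemma reduced_act:
  assumes x: "x \<in> arr S" and w: "reduced w"
  shows "reduced (act x w)"
proof (cases w)
  case (Cons u w')
  have u: "u \<in> arr S" using w Cons reduced_ConsD by blast
  show ?thesis
  proof (cases "x \<in> ids S \<or> cmp S x u = None")
    case True
    then show ?thesis using Cons x w cmp_eq_None_iff[OF x u] by auto
  next
    case False
    then obtain z where z: "x \<notin> ids S" "cmp S x u = Some z" by auto
    then have "src S z = src S u" "z \<in> arr S" using src_tgt_cmp cmp_arrD by auto
    then show ?thesis
      using Cons z w reduced_ConsD[of u w'] reduced_Cons_same_src[of u w' z] by auto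
  qed
qed (use x in simp)

lemma act_cmp:
  assumes xy: "cmp S x y = Some z" and w: "reduced w"
  shows "act x (act y w) = act z w"
proof -
  have x: "x \<in> arr S" and y: "y \<in> arr S" and z: "z \<in> arr S" using cmp_arrD xy by auto
  have src_z: "src S z = src S y" using src_tgt_cmp xy by auto
  have src_x: "src S x = tgt S y" using cmp_eq_None_iff[OF x y] xy by auto
  consider "x \<in> ids S" | "y \<in> ids S" | "x \<notin> ids S" "y \<notin> ids S" "w = []"
    | u w' where "x \<notin> ids S" "y \<notin> ids S" "w = u # w'" by (cases w) auto
  then show ?thesis
  proof cases
    case 1 then show ?thesis using cmp_id_left[OF xy] act_id by simp
  next
    case 2 then show ?thesis using cmp_id_right[OF xy] act_id by simp
  next
    case 3 then show ?thesis using xy by simp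
  next
    case 4
    have u: "u \<in> arr S - ids S" using w 4 reduced_ConsD by blast
    show ?thesis
    proof (cases "cmp S y u")
      case None
      then have "cmp S z u = None" using cmp_eq_None_iff[of y u] cmp_eq_None_iff[of z u] y z u src_z by auto
      then show ?thesis using 4 None xy act_id by auto
    next
      case (Some v)
      have v: "v \<in> arr S" and src_v: "src S v = src S u" and tgt_v: "tgt S v = tgt S y"
        using cmp_arrD src_tgt_cmp Some by auto
      obtain r where r: "cmp S x v = Some r"
        using cmp_eq_None_iff[OF x v] src_x tgt_v by auto
      have zu: "cmp S z u = Some r" using cmp_assoc[OF xy Some] r by simp
      have r_u: "z \<in> ids S \<Longrightarrow> r = u" using cmp_id_left[OF zu] .
      show ?thesis
      proof (cases "v \<in> ids S")
        case True
        \<comment> \<open>\<open>y u\<close> is an identity, so \<open>x\<close> has the source of \<open>u\<close> and cannot compose with \<open>w'\<close>\<close>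
        then have "r = x" "src S x = src S u"
          using cmp_id_right[OF r] src_x tgt_v src_v src_tgt_id by auto
        then show ?thesis
          using 4 Some True u zu r_u act_same_src[of u w' x] w x act_id by auto
      next
        case False
        then show ?thesis using 4 Some r zu r_u u by auto
      qed
    qed
  qed
qed

lemma umon_eq_act:
  "umon_eq S u v \<Longrightarrow> reduced w \<Longrightarrow> foldr act u w = foldr act v w"
proof (induction arbitrary: w rule: umon_eq.induct)
  case (ctxt u v p q)
  have "reduced (foldr act q w)"
    using ctxt.hyps(3) ctxt.prems by (induction q) (auto intro: reduced_act)
  then show ?case using ctxt.IH by simp
qed (simp_all add: act_id act_cmp)

lemma umon_eq_single_Nil_imp_id: "umon_eq S [x] [] \<Longrightarrow> x \<in> ids S"
  using umon_eq_act[of "[x]" "[]" "[]"] by (auto split: if_splits)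

lemma equiv_umon_rel: "equiv (lists (arr S)) (umon_rel S)"
proof (rule equivI)
  show "refl_on (lists (arr S)) (umon_rel S)"
    unfolding refl_on_def umon_rel_def using umon_eq_lists umon_eq.refl by blast
  show "sym (umon_rel S)"
    unfolding sym_def umon_rel_def using umon_eq.sym by blast
  show "trans (umon_rel S)"
    unfolding trans_def umon_rel_def using umon_eq.trans by blast
  show "umon_rel S \<subseteq> lists (arr S) \<times> lists (arr S)"
    unfolding umon_rel_def using umon_eq_lists by blast
qed

lemma umon_class_eq_iff:
  "u \<in> lists (arr S) \<Longrightarrow> v \<in> lists (arr S) \<Longrightarrow>
   umon_rel S `` {u} = umon_rel S `` {v} \<longleftrightarrow> umon_eq S u v"
  by (subst eq_equiv_class_iff[OF equiv_umon_rel]) (simp_all add: umon_rel_def)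

lemma umon_eq_append:
  assumes "umon_eq S a a'" "umon_eq S b b'"
  shows "umon_eq S (a @ b) (a' @ b')"
proof -
  have "umon_eq S ([] @ a @ b) ([] @ a' @ b)"
    using assms umon_eq_lists by (intro umon_eq.ctxt) auto
  moreover have "umon_eq S (a' @ b @ []) (a' @ b' @ [])"
    using assms umon_eq_lists by (intro umon_eq.ctxt) auto
  ultimately show ?thesis using umon_eq.trans by fastforce
qed

lemma U_mon_mult_class:
  assumes a: "a \<in> lists (arr S)" and b: "b \<in> lists (arr S)"
  shows "umon_rel S `` {a} \<otimes>\<^bsub>U_mon S\<^esub> umon_rel S `` {b} = umon_rel S `` {a @ b}"
proof -
  have class_eq: "umon_rel S `` {a' @ b'} = umon_rel S `` {a @ b}"
    if "a' \<in> umon_rel S `` {a}" "b' \<in> umon_rel S `` {b}" for a' b'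
  proof -
    have "(a @ b, a' @ b') \<in> umon_rel S"
      using that umon_eq_append unfolding umon_rel_def by simp
    then show ?thesis by (rule equiv_class_eq[OF equiv_umon_rel, symmetric])
  qed
  have a_refl: "a \<in> umon_rel S `` {a}" and b_refl: "b \<in> umon_rel S `` {b}"
    using a b by (simp_all add: umon_rel_def umon_eq.refl)
  have "umon_rel S `` {a} \<otimes>\<^bsub>U_mon S\<^esub> umon_rel S `` {b}
      = (\<Union>a' \<in> umon_rel S `` {a}. \<Union>b' \<in> umon_rel S `` {b}. umon_rel S `` {a' @ b'})"
    by (simp add: U_mon_def)
  also have "\<dots> = (\<Union>a' \<in> umon_rel S `` {a}. \<Union>b' \<in> umon_rel S `` {b}. umon_rel S `` {a @ b})"
    using class_eq by (intro SUP_cong) simp_all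
  also have "\<dots> = umon_rel S `` {a @ b}"
    using a_refl b_refl by blast
  finally show ?thesis .
qed

lemma carrier_U_mon: "carrier (U_mon S) = lists (arr S) // umon_rel S"
  and one_U_mon: "\<one>\<^bsub>U_mon S\<^esub> = umon_rel S `` {[]}"
  unfolding U_mon_def by simp_all

lemma umon_eq_preserves_ids:
  assumes "conical_category S"
  shows "umon_eq S u v \<Longrightarrow> set u \<subseteq> ids S \<longleftrightarrow> set v \<subseteq> ids S"
proof (induction rule: umon_eq.induct)
  case (rel_mult x y z)
  have "z \<in> ids S \<Longrightarrow> x \<in> ids S"
    using assms rel_mult unfolding conical_category_def by blast
  then show ?case using cmp_id_left[OF rel_mult] by auto
qed auto

lemma ids_umon_eq_Nil: "set u \<subseteq> ids S \<Longrightarrow> umon_eq S u []"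
proof (induction u)
  case Nil
  show ?case by (simp add: umon_eq.refl)
next
  case (Cons e u)
  have "umon_eq S ([] @ [e] @ u) ([] @ [] @ u)"
    using Cons.prems ids_subset_arr by (intro umon_eq.ctxt umon_eq.rel_id) auto
  then show ?case using Cons umon_eq.trans[of S "e # u" u "[]"] by simp
qed

lemma conical_monoid_U_mon_if_conical:
  assumes conical: "conical_category S"
  shows "conical_monoid (U_mon S)"
  unfolding conical_monoid_def
proof (intro ballI impI)
  fix A B
  assume "A \<in> carrier (U_mon S)" "B \<in> carrier (U_mon S)" and AB: "A \<otimes>\<^bsub>U_mon S\<^esub> B = \<one>\<^bsub>U_mon S\<^esub>"
  then obtain a b where a: "a \<in> lists (arr S)" "A = umon_rel S `` {a}"
    and b: "b \<in> lists (arr S)" "B = umon_rel S `` {b}"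
    unfolding carrier_U_mon by (auto elim!: quotientE)
  have "umon_eq S (a @ b) []"
    using AB a b U_mon_mult_class umon_class_eq_iff unfolding one_U_mon by auto
  then have "set a \<subseteq> ids S" "set b \<subseteq> ids S"
    using umon_eq_preserves_ids[OF conical, of "a @ b" "[]"] by simp_all
  then show "A = \<one>\<^bsub>U_mon S\<^esub> \<and> B = \<one>\<^bsub>U_mon S\<^esub>"
    using a b ids_umon_eq_Nil umon_class_eq_iff unfolding one_U_mon by auto
qed

lemma conical_if_conical_monoid_U_mon:
  assumes conical: "conical_monoid (U_mon S)"
  shows "conical_category S"
  unfolding conical_category_def
proof (intro allI impI)
  fix x y z
  assume xy: "cmp S x y = Some z" and "z \<in> ids S"
  then have "umon_eq S ([x] @ [y]) []"
    using umon_eq.trans[OF umon_eq.rel_mult umon_eq.rel_id] by simp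
  moreover have x: "[x] \<in> lists (arr S)" and y: "[y] \<in> lists (arr S)"
    using cmp_arrD xy by auto
  ultimately have "umon_rel S `` {[x]} \<otimes>\<^bsub>U_mon S\<^esub> umon_rel S `` {[y]} = \<one>\<^bsub>U_mon S\<^esub>"
    using U_mon_mult_class umon_class_eq_iff unfolding one_U_mon by simp
  moreover have "umon_rel S `` {[x]} \<in> carrier (U_mon S)" "umon_rel S `` {[y]} \<in> carrier (U_mon S)"
    using x y unfolding carrier_U_mon by (simp_all add: quotientI)
  ultimately have "umon_rel S `` {[x]} = \<one>\<^bsub>U_mon S\<^esub>"
    using conical unfolding conical_monoid_def by blast
  then show "x \<in> ids S"
    using x umon_class_eq_iff umon_eq_single_Nil_imp_id unfolding one_U_mon by simp
qed

end

theorem proposition4p1: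
  fixes S :: "('a, 'b) category_scheme"
  assumes "is_category S"
  shows "conical_category S \<longleftrightarrow> conical_monoid (U_mon S)"
proof -
  interpret arrow_category S by (rule arrow_category.intro) (rule assms)
  show ?thesis
    using conical_monoid_U_mon_if_conical conical_if_conical_monoid_U_mon by blast
qed

end
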